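(* For any consistent $\mathrm{k}$-step IEMS method with real coefficients $a_j$ ($0\le j\le\mathrm{k}-1$), $b_j$ ($0\le j\le\mathrm{k}$), $c_j$ ($0\le j\le\mathrm{k}-1$), the implicit-explicit controllability intensity satisfies $$\mathfrak{I}_{\mathrm{IE}}:=\frac{\min_{\theta\in[0,2\pi)}\Re\big[b(\theta)/a(\theta)\big]}{\max_{\theta\in[0,2\pi)}\big|c(\theta)/a(\theta)\big|}\le1,$$ and the value $1$ is achieved by the implicit-explicit Euler scheme ($\mathrm{k}=1$, $a_0=1$, $b_0=1$, $b_1=0$, $c_0=1$).
   Context: $a(\theta)=\sum_ja_je^{\imath j\theta}$, $b(\theta)=\sum_jb_je^{\imath j\theta}$, $c(\theta)=\sum_jc_je^{\imath j\theta}$ with $\imath=\sqrt{-1}$. The method is $\sum_{j=0}^{\mathrm{k}-1}a_j\partial_\tau u^{n-j}+\varpi\sum_{j=0}^{\mathrm{k}}b_j\mathcal{L}u^{n-j}=\sum_{j=0}^{\mathrm{k}-1}c_j\mathcal{F}(u^{n-j-1})$; consistency means $\sum_{j=0}^{\mathrm{k}-1}a_j=\sum_{j=0}^{\mathrm{k}}b_j=\sum_{j=0}^{\mathrm{k}-1}c_j=1$. The maximum and minimum are assumed to be finite, with the denominator positive. *)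

theory Defs
  imports Complex_Main
begin

definition symb :: "nat \<Rightarrow> (nat \<Rightarrow> real) \<Rightarrow> real \<Rightarrow> complex" where
  "symb m x \<theta> = (\<Sum>j<m. complex_of_real (x j) * exp (\<i> * of_nat j * complex_of_real \<theta>))"

text \<open>Implicit-explicit controllability intensity of a k-step IEMS method with coefficients
  a_0..a_(k-1), b_0..b_k, c_0..c_(k-1): min over [0,2pi) of Re(b/a) divided by
  max over [0,2pi) of |c/a| (min/max are attained when a does not vanish).\<close>
definition IE_intensity :: "nat \<Rightarrow> (nat \<Rightarrow> real) \<Rightarrow> (nat \<Rightarrow> real) \<Rightarrow> (nat \<Rightarrow> real) \<Rightarrow> real" where
  "IE_intensity k a b c =
     (INF \<theta>\<in>{0..<2*pi}. Re (symb (k+1) b \<theta> / symb k a \<theta>)) /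
     (SUP \<theta>\<in>{0..<2*pi}. cmod (symb k c \<theta> / symb k a \<theta>))"

end

theory Submission
  imports Defs "HOL-Analysis.Analysis"
begin

text \<open>At \<open>\<theta> = 0\<close> every symbol reduces to the sum of its coefficients, so consistency makes
  \<open>b/a\<close> and \<open>c/a\<close> both equal to 1 there: the infimum of \<open>Re (b/a)\<close> is at most 1 and the
  supremum of \<open>|c/a|\<close> is at least 1. Both extrema exist because the symbols are continuous and
  \<open>2\<pi>\<close>-periodic, so the quotients are continuous on the compact interval \<open>[0, 2\<pi>]\<close>.\<close>

lemma continuous_on_symb: "continuous_on S (symb m x)"
  unfolding symb_def by (intro continuous_intros)

lemma symb_at_0: "symb m x 0 = of_real (\<Sum>j<m. x j)"
  unfolding symb_def by simp

lemma symb_periodic: "symb m x (\<theta> + 2 * pi) = symb m x \<theta>"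
proof -
  have "exp (\<i> * of_nat j * of_real (\<theta> + 2 * pi)) = exp (\<i> * of_nat j * of_real \<theta>)"
    for j :: nat
  proof -
    have "\<i> * of_nat j * of_real (\<theta> + 2 * pi) =
          \<i> * of_nat j * of_real \<theta> + of_nat j * (2 * of_real pi * \<i>)"
      by (simp add: algebra_simps)
    then show ?thesis
      by (simp only: exp_add exp_of_nat_mult exp_two_pi_i power_one mult_1_right)
  qed
  then show ?thesis
    unfolding symb_def by simp
qed

lemma bounded_symb_quotient:
  assumes a_nz: "\<forall>\<theta>\<in>{0..<2*pi}. symb k a \<theta> \<noteq> 0"
  shows "bounded ((\<lambda>\<theta>. symb m x \<theta> / symb k a \<theta>) ` {0..<2*pi})"
proof -
  have "symb k a \<theta> \<noteq> 0" if "\<theta> \<in> {0..2*pi}" for \<theta>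
  proof (cases "\<theta> = 2 * pi")
    case True
    then show ?thesis
      using a_nz symb_periodic[of k a 0] pi_gt_zero by auto
  next
    case False
    then show ?thesis
      using a_nz that by auto
  qed
  then have "continuous_on {0..2*pi} (\<lambda>\<theta>. symb m x \<theta> / symb k a \<theta>)"
    by (intro continuous_intros continuous_on_symb) auto
  then have "bounded ((\<lambda>\<theta>. symb m x \<theta> / symb k a \<theta>) ` {0..2*pi})"
    by (intro compact_imp_bounded compact_continuous_image) auto
  then show ?thesis
    by (rule bounded_subset) auto
qed

lemma IE_intensity_Euler:
  "IE_intensity 1 (\<lambda>j. 1) (\<lambda>j. if j = 0 then 1 else 0) (\<lambda>j. 1) = 1"
proof -
  have a: "symb 1 (\<lambda>j. 1) \<theta> = 1" for \<theta>
    unfolding symb_def by simp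
  have b: "symb (1 + 1) (\<lambda>j. if j = 0 then 1 else 0) \<theta> = 1" for \<theta>
    unfolding symb_def by (simp add: numeral_2_eq_2 lessThan_Suc)
  have "{0..<2*pi} \<noteq> ({} :: real set)"
    using pi_gt_zero by simp
  then show ?thesis
    unfolding IE_intensity_def a b by simp
qed

theorem corollary3p4:
  fixes k :: nat and a b c :: "nat \<Rightarrow> real"
  assumes cons_a: "(\<Sum>j<k. a j) = 1"
      and cons_b: "(\<Sum>j\<le>k. b j) = 1"
      and cons_c: "(\<Sum>j<k. c j) = 1"
      and a_nz: "\<forall>\<theta>\<in>{0..<2*pi}. symb k a \<theta> \<noteq> 0"
      and den_pos: "(SUP \<theta>\<in>{0..<2*pi}. cmod (symb k c \<theta> / symb k a \<theta>)) > 0"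
  shows "IE_intensity k a b c \<le> 1
         \<and> IE_intensity 1 (\<lambda>j. 1) (\<lambda>j. if j = 0 then 1 else 0) (\<lambda>j. 1) = 1"
proof -
  have at_0: "symb k a 0 = 1" "symb (k + 1) b 0 = 1" "symb k c 0 = 1"
    using cons_a cons_b cons_c by (simp_all add: symb_at_0 lessThan_Suc_atMost)
  have zero_in: "(0 :: real) \<in> {0..<2*pi}"
    using pi_gt_zero by simp
  have "bounded (Re ` (\<lambda>\<theta>. symb (k+1) b \<theta> / symb k a \<theta>) ` {0..<2*pi})"
    using bounded_symb_quotient[OF a_nz] bounded_linear_Re by (rule bounded_linear_image)
  then have "(INF \<theta>\<in>{0..<2*pi}. Re (symb (k+1) b \<theta> / symb k a \<theta>)) \<le>
             Re (symb (k+1) b 0 / symb k a 0)"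
    by (intro cINF_lower zero_in bounded_imp_bdd_below) (simp add: image_image)
  moreover have "cmod (symb k c 0 / symb k a 0) \<le>
                 (SUP \<theta>\<in>{0..<2*pi}. cmod (symb k c \<theta> / symb k a \<theta>))"
    using bounded_symb_quotient[OF a_nz]
    by (intro cSUP_upper zero_in bounded_imp_bdd_above) (simp add: bounded_norm_comp)
  ultimately have "IE_intensity k a b c \<le> 1"
    unfolding IE_intensity_def using at_0 by (simp add: divide_le_eq)
  then show ?thesis
    using IE_intensity_Euler by simp
qed

end
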